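(* In the basic model with $n$ odd, the worst-case deterministic round complexity of the nontrivial move problem is $\Theta(\log(N/n))$. That is, there is an algorithm solving it in $O(\log(N/n))$ rounds, and every deterministic algorithm needs $\Omega(\log(N/n))$ rounds in the worst case.
   Context: Model (basic): $n>4$ agents are at distinct, arbitrary initial positions on a circle of circumference $1$ and act in synchronised unit-time rounds. Each agent has its own notion of right (clockwise) and left; these need not be consistent across agents. At the start of each round every agent $a$ chooses $\mathrm{dir}_a\in\{\text{right},\text{left}\}$ and moves at unit speed. Agents never pass: two colliding agents instantly reverse direction. There is no communication. At the end of a round each agent learns only the clockwise distance, in its own orientation, from its start to its end position. Agents have distinct IDs in $\{1,\dots,N\}$, $N\ge n$ known, and know only the parity of $n$. Rotation index: if $n_C$ agents start clockwise and $n_A$ anticlockwise (objective orientation), each agent moves to the initial position of the agent $(n_C-n_A)\bmod n$ places clockwise; this is the rotation index. A nontrivial move is a round whose rotation index is not in $\{0,n/2\}$. The nontrivial move problem is to assign to each agent a direction $\mathrm{dir}_a$ so that the round in which all agents start in these directions is a nontrivial move. *)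

theory Defs
  imports Complex_Main
begin

text \<open>Agents are indexed 0..n-1 in the objective clockwise order of their initial
positions. pos s is the position (clockwise coordinate in [0,1)) of slot s,
orient i says whether agent i's own "right" is the objective clockwise direction,
ident i is the ID of agent i. A deterministic algorithm maps an ID and the list
of observations made so far to a direction (True = right, False = left, in the
agent's own orientation).\<close>

definition valid_config :: "nat \<Rightarrow> nat \<Rightarrow> (nat \<Rightarrow> real) \<Rightarrow> (nat \<Rightarrow> nat) \<Rightarrow> bool" where
  "valid_config N n pos ident \<longleftrightarrow>
     4 < n \<and> n \<le> N \<and>
     (\<forall>i<n. 0 \<le> pos i \<and> pos i < 1) \<and>
     (\<forall>i j. i < j \<and> j < n \<longrightarrow> pos i < pos j) \<and>
     inj_on ident {..<n} \<and> ident ` {..<n} \<subseteq> {1..N}"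

text \<open>Rotation index of a round in which agent i starts objectively clockwise iff cl i.\<close>
definition rot_index :: "nat \<Rightarrow> (nat \<Rightarrow> bool) \<Rightarrow> nat" where
  "rot_index n cl =
     nat ((int (card {i. i < n \<and> cl i}) - int (card {i. i < n \<and> \<not> cl i})) mod int n)"

definition cw_dist :: "real \<Rightarrow> real \<Rightarrow> real" where
  "cw_dist x y = frac (y - x)"

definition nontrivial :: "nat \<Rightarrow> nat \<Rightarrow> bool" where
  "nontrivial n r \<longleftrightarrow> r \<noteq> 0 \<and> 2 * r \<noteq> n"

definition objective_cw :: "(nat \<Rightarrow> bool) \<Rightarrow> nat \<Rightarrow> bool \<Rightarrow> bool" where
  "objective_cw orient i d \<longleftrightarrow> (d = orient i)"

text \<open>State before round t: cumulative rotation offset R (agent i occupies slot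
(i + R) mod n) and the observation history of every agent.\<close>
fun run :: "nat \<Rightarrow> (nat \<Rightarrow> real) \<Rightarrow> (nat \<Rightarrow> bool) \<Rightarrow> (nat \<Rightarrow> nat) \<Rightarrow>
            (nat \<Rightarrow> real list \<Rightarrow> bool) \<Rightarrow> nat \<Rightarrow> nat \<times> (nat \<Rightarrow> real list)" where
  "run n pos orient ident alg 0 = (0, \<lambda>i. [])"
| "run n pos orient ident alg (Suc t) =
     (let (R, h) = run n pos orient ident alg t;
          r = rot_index n (\<lambda>i. objective_cw orient i (alg (ident i) (h i)));
          obs = (\<lambda>i. let s = (i + R) mod n; e = (i + R + r) mod n in
                   if orient i then cw_dist (pos s) (pos e) else cw_dist (pos e) (pos s))
      in ((R + r) mod n, \<lambda>i. h i @ [obs i]))"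

definition round_rot :: "nat \<Rightarrow> (nat \<Rightarrow> real) \<Rightarrow> (nat \<Rightarrow> bool) \<Rightarrow> (nat \<Rightarrow> nat) \<Rightarrow>
            (nat \<Rightarrow> real list \<Rightarrow> bool) \<Rightarrow> nat \<Rightarrow> nat" where
  "round_rot n pos orient ident alg t =
     (let h = snd (run n pos orient ident alg t)
      in rot_index n (\<lambda>i. objective_cw orient i (alg (ident i) (h i))))"

end

theory Submission
  imports Defs "HOL-Library.FuncSet"
begin

text \<open>For odd n a round is nontrivial exactly when the agents do not all start in the same
objective direction. While every round is trivial, each agent observes only zero
displacements, so its next choice is a function of its ID alone.

Upper bound: let 2^(L-1) \<le> N \<le> 2^L and 2^m < n < 2^(m+1). In round 0 every agent moves to
its own right; in round s \<ge> 1 it moves according to bit L - s of its ID minus one. If round 0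
is trivial, all orientations agree; if rounds 1, ..., L - m are trivial too, all IDs agree in
their bits m, ..., L - 1 and hence lie in a block of 2^m < n integers, which is impossible.

Lower bound: during T silent rounds an ID determines one of 2^T patterns (in which rounds its
choice differs from its choice in round 0). If N \<ge> n 2^T, some n IDs share a pattern, and
orienting each of these agents so that round 0 is unanimous keeps the first T rounds
unanimous.\<close>

lemma odd_sum_dvd_diff_iff:
  fixes a b n :: nat
  assumes "a + b = n" "odd n"
  shows "int n dvd int a - int b \<longleftrightarrow> a = 0 \<or> b = 0"
proof
  assume "int n dvd int a - int b"
  then obtain k where k: "int a - int b = int n * k" by (elim dvdE)
  have "k \<noteq> 0"
  proof
    assume "k = 0"
    hence "a = b" using k by simp
    thus False using assms by auto
  qed
  hence "int n * 1 \<le> int n * \<bar>k\<bar>" by (intro mult_left_mono) auto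
  hence "int n \<le> \<bar>int a - int b\<bar>" by (simp add: k abs_mult)
  thus "a = 0 \<or> b = 0" using assms(1) by linarith
next
  assume "a = 0 \<or> b = 0"
  hence "int a - int b = - int n \<or> int a - int b = int n" using assms(1) by auto
  thus "int n dvd int a - int b" by auto
qed

definition unanimous :: "nat \<Rightarrow> (nat \<Rightarrow> bool) \<Rightarrow> bool" where
  "unanimous n P \<longleftrightarrow> (\<forall>i<n. P i) \<or> (\<forall>i<n. \<not> P i)"

lemma rot_index_eq_0_iff:
  assumes "odd n"
  shows "rot_index n cl = 0 \<longleftrightarrow> unanimous n cl"
proof -
  let ?A = "{i. i < n \<and> cl i}" and ?B = "{i. i < n \<and> \<not> cl i}"
  have "?A \<union> ?B = {..<n}" "?A \<inter> ?B = {}" by auto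
  hence sum: "card ?A + card ?B = n"
    by (metis card_Un_disjoint card_lessThan finite_Un finite_lessThan)
  have "0 \<le> (int (card ?A) - int (card ?B)) mod int n" using assms by (simp add: odd_pos)
  hence "rot_index n cl = 0 \<longleftrightarrow> (int (card ?A) - int (card ?B)) mod int n = 0"
    unfolding rot_index_def by auto
  also have "\<dots> \<longleftrightarrow> card ?A = 0 \<or> card ?B = 0"
    using odd_sum_dvd_diff_iff[OF sum assms] by (simp add: dvd_eq_mod_eq_0)
  also have "\<dots> \<longleftrightarrow> unanimous n cl"
    unfolding unanimous_def by auto
  finally show ?thesis .
qed

lemma nontrivial_iff_neq_0:
  "odd n \<Longrightarrow> nontrivial n r \<longleftrightarrow> r \<noteq> 0"
  unfolding nontrivial_def by auto

lemma run_after_trivial_rounds: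
  assumes "\<forall>s<t. round_rot n pos orient ident alg s = 0"
  shows "run n pos orient ident alg t = (0, \<lambda>i. replicate t 0)"
  using assms
proof (induction t)
  case (Suc t)
  hence IH: "run n pos orient ident alg t = (0, \<lambda>i. replicate t 0)" by simp
  have "round_rot n pos orient ident alg t = 0" using Suc.prems by simp
  hence "rot_index n (\<lambda>i. objective_cw orient i (alg (ident i) (replicate t 0))) = 0"
    using IH unfolding round_rot_def by simp
  thus ?case
    using IH by (simp add: cw_dist_def fun_eq_iff replicate_append_same)
qed simp

lemma round_rot_after_trivial_rounds:
  assumes "\<forall>s<t. round_rot n pos orient ident alg s = 0"
  shows "round_rot n pos orient ident alg t =
           rot_index n (\<lambda>i. alg (ident i) (replicate t 0) = orient i)"
  using run_after_trivial_rounds[OF assms] unfolding round_rot_def objective_cw_def by simp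

lemma trivial_rounds_iff_unanimous:
  assumes "odd n"
  shows "(\<forall>s<t. round_rot n pos orient ident alg s = 0) \<longleftrightarrow>
           (\<forall>s<t. unanimous n (\<lambda>i. alg (ident i) (replicate s 0) = orient i))"
proof (induction t)
  case (Suc t)
  have "round_rot n pos orient ident alg t = 0 \<longleftrightarrow>
          unanimous n (\<lambda>i. alg (ident i) (replicate t 0) = orient i)"
    if "\<forall>s<t. round_rot n pos orient ident alg s = 0"
    using round_rot_after_trivial_rounds[OF that] rot_index_eq_0_iff[OF assms] by simp
  with Suc.IH show ?case by (auto simp: less_Suc_eq)
qed simp

subsection \<open>Upper bound\<close>

definition bit_algorithm :: "nat \<Rightarrow> nat \<Rightarrow> real list \<Rightarrow> bool" where
  "bit_algorithm L x h \<longleftrightarrow> h \<noteq> [] \<and> bit (x - 1) (L - length h)"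

lemma div_exp_eq_if_high_bits_eq:
  fixes a b :: nat
  assumes "a < 2^L" "b < 2^L" and "\<And>j. m \<le> j \<Longrightarrow> j < L \<Longrightarrow> bit a j \<longleftrightarrow> bit b j"
  shows "a div 2^m = b div 2^m"
proof (rule bit_eqI)
  have no_high: "\<not> bit x j" if "x < 2^L" "L \<le> j" for x j :: nat
  proof -
    have "(2::nat)^L \<le> 2^j" using that(2) by (rule power_increasing) simp
    hence "x < 2^j" using that(1) by linarith
    thus ?thesis by (simp add: bit_iff_odd)
  qed
  fix k
  have "bit (x div 2^m) k \<longleftrightarrow> bit x (m + k)" for x :: nat
    by (simp add: bit_iff_odd div_mult2_eq power_add)
  thus "bit (a div 2^m) k \<longleftrightarrow> bit (b div 2^m) k"
    using assms(3)[of "m + k"] no_high[OF assms(1)] no_high[OF assms(2)] by (cases "m + k < L") auto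
qed

lemma card_le_if_div_eq:
  fixes d q :: nat
  assumes "finite A" "0 < d" "\<forall>x\<in>A. x div d = q"
  shows "card A \<le> d"
proof -
  have "inj_on (\<lambda>x. x mod d) A"
    by (rule inj_onI) (metis assms(3) div_mult_mod_eq)
  moreover have "(\<lambda>x. x mod d) ` A \<subseteq> {..<d}" using assms(2) by auto
  ultimately show ?thesis using card_inj_on_le[of _ A "{..<d}"] by simp
qed

lemma card_ids_le_if_high_bits_agree:
  assumes V: "valid_config N n pos ident" and "N \<le> 2^L"
    and agree: "\<And>i j. i < n \<Longrightarrow> m \<le> j \<Longrightarrow> j < L \<Longrightarrow> bit (ident i - 1) j \<longleftrightarrow> bit (ident 0 - 1) j"
  shows "n \<le> 2^m"
proof -
  have inj: "inj_on ident {..<n}" and ids: "\<And>i. i < n \<Longrightarrow> 1 \<le> ident i \<and> ident i \<le> N"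
    and "0 < n" using V unfolding valid_config_def by auto
  have small: "ident i - 1 < 2^L" if "i < n" for i
    using ids[OF that] \<open>N \<le> 2^L\<close> by linarith
  have "inj_on (\<lambda>i. ident i - 1) {..<n}"
  proof (rule inj_onI)
    fix i j assume "i \<in> {..<n}" "j \<in> {..<n}" "ident i - 1 = ident j - 1"
    moreover have "1 \<le> ident i" "1 \<le> ident j" using ids \<open>i \<in> {..<n}\<close> \<open>j \<in> {..<n}\<close> by auto
    ultimately have "ident i = ident j" by linarith
    thus "i = j" using inj \<open>i \<in> {..<n}\<close> \<open>j \<in> {..<n}\<close> by (simp add: inj_on_eq_iff)
  qed
  hence "n = card ((\<lambda>i. ident i - 1) ` {..<n})" by (simp add: card_image)
  also have "\<dots> \<le> 2^m"
  proof (rule card_le_if_div_eq)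
    have "(ident i - 1) div 2^m = (ident 0 - 1) div 2^m" if "i < n" for i
      by (rule div_exp_eq_if_high_bits_eq[OF small[OF that] small[OF \<open>0 < n\<close>] agree[OF that]])
    thus "\<forall>x\<in>(\<lambda>i. ident i - 1) ` {..<n}. x div 2^m = (ident 0 - 1) div 2^m" by blast
  qed simp_all
  finally show ?thesis .
qed

lemma bit_algorithm_nontrivial:
  assumes V: "valid_config N n pos ident" and "odd n" and "N \<le> 2^L" and "2^m < n"
  shows "\<exists>t\<le>L - m. nontrivial n (round_rot n pos orient ident (bit_algorithm L) t)"
proof (rule ccontr)
  let ?choice = "\<lambda>s i. bit_algorithm L (ident i) (replicate s 0) = orient i"
  assume "\<not> ?thesis"
  hence "\<forall>s<Suc (L - m). round_rot n pos orient ident (bit_algorithm L) s = 0"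
    using nontrivial_iff_neq_0[OF \<open>odd n\<close>] by (auto simp: less_Suc_eq_le)
  hence unan: "unanimous n (?choice s)" if "s \<le> L - m" for s
    using trivial_rounds_iff_unanimous[OF \<open>odd n\<close>] that by (metis less_Suc_eq_le)
  have "0 < n" using V unfolding valid_config_def by auto
  have orient: "orient i = orient 0" if "i < n" for i
    using unan[of 0] that \<open>0 < n\<close> unfolding unanimous_def bit_algorithm_def by auto
  have "n \<le> 2^m"
  proof (rule card_ids_le_if_high_bits_agree[OF V \<open>N \<le> 2^L\<close>])
    fix i j assume "i < n" "m \<le> j" "j < L"
    have "unanimous n (?choice (L - j))" by (rule unan) (use \<open>m \<le> j\<close> in simp)
    hence "?choice (L - j) i = ?choice (L - j) 0"
      using \<open>i < n\<close> \<open>0 < n\<close> unfolding unanimous_def by blast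
    moreover have "L - (L - j) = j" using \<open>j < L\<close> by simp
    ultimately show "bit (ident i - 1) j \<longleftrightarrow> bit (ident 0 - 1) j"
      using orient[OF \<open>i < n\<close>] \<open>j < L\<close> unfolding bit_algorithm_def by auto
  qed
  thus False using \<open>2^m < n\<close> by simp
qed

lemma bit_algorithm_round_bound:
  assumes V: "valid_config N n pos ident" and "odd n" and "N \<le> 2^L" and "2^L \<le> 2 * N"
  shows "\<exists>t. real (Suc t) \<le> 3 * (1 + log 2 (real N / real n)) \<and>
             nontrivial n (round_rot n pos orient ident (bit_algorithm L) t)"
proof -
  have "4 < n" "n \<le> N" using V unfolding valid_config_def by auto
  obtain m where "2^m \<le> n" and m_upper: "n < 2^(m + 1)"
    using ex_power_ivl1[of 2 n] \<open>4 < n\<close> by auto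
  have "m \<noteq> 0" using m_upper \<open>4 < n\<close> by (cases m) auto
  hence "2^m \<noteq> n" using \<open>odd n\<close> by auto
  with \<open>2^m \<le> n\<close> have "2^m < n" by simp
  then obtain t where "t \<le> L - m"
    and nt: "nontrivial n (round_rot n pos orient ident (bit_algorithm L) t)"
    using bit_algorithm_nontrivial[OF V \<open>odd n\<close> \<open>N \<le> 2^L\<close>] by blast
  have "(2::nat)^m < 2^L" using \<open>2^m < n\<close> \<open>n \<le> N\<close> \<open>N \<le> 2^L\<close> by linarith
  hence "real t \<le> real L - real m"
    using \<open>t \<le> L - m\<close> by (simp add: of_nat_diff power_less_imp_less_exp less_imp_le)
  have "real L \<le> log 2 (2 * real N)"
    using le_log2_of_power[OF \<open>2^L \<le> 2 * N\<close>] by simp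
  also have "\<dots> = 1 + log 2 (real N)"
    using \<open>4 < n\<close> \<open>n \<le> N\<close> by (simp add: log_mult)
  finally have "real L \<le> 1 + log 2 (real N)" .
  moreover have "log 2 (real n) < real m + 1"
    using log2_of_power_less[OF m_upper] \<open>4 < n\<close> by simp
  moreover have "log 2 (real N / real n) = log 2 (real N) - log 2 (real n)"
    using \<open>4 < n\<close> \<open>n \<le> N\<close> by (simp add: log_divide)
  ultimately have "real (Suc t) \<le> 3 + log 2 (real N / real n)"
    using \<open>real t \<le> real L - real m\<close> unfolding of_nat_Suc by linarith
  also have "\<dots> \<le> 3 * (1 + log 2 (real N / real n))"
    using \<open>4 < n\<close> \<open>n \<le> N\<close> by simp
  finally show ?thesis using nt by blast
qed

lemma bit_algorithm_upper_bound:
  "\<exists>alg. \<forall>n pos orient ident. valid_config N n pos ident \<and> odd n \<longrightarrow>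
     (\<exists>t. real (Suc t) \<le> 3 * (1 + log 2 (real N / real n)) \<and>
          nontrivial n (round_rot n pos orient ident alg t))"
proof (cases "N = 0")
  case True
  thus ?thesis by (simp add: valid_config_def)
next
  case False
  then obtain k where "2^k \<le> N" "N < 2^(k + 1)" using ex_power_ivl1[of 2 N] by auto
  hence "N \<le> 2^(k + 1)" "2^(k + 1) \<le> 2 * N" by simp_all
  thus ?thesis using bit_algorithm_round_bound by (intro exI[of _ "bit_algorithm (k + 1)"]) blast
qed

subsection \<open>Lower bound\<close>

lemma pigeonhole_inj_fibre:
  assumes "finite A" "finite B" "B \<noteq> {}" "f ` A \<subseteq> B" "n * card B \<le> card A"
  shows "\<exists>g y. inj_on g {..<n} \<and> g ` {..<n} \<subseteq> A \<and> (\<forall>i<n. f (g i) = y)"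
proof -
  obtain y where "card A \<le> card (f -` {y} \<inter> A) * card B"
    using pigeonhole_card[of f A B] assms by auto
  hence "n * card B \<le> card (f -` {y} \<inter> A) * card B" using assms(5) by linarith
  hence "n \<le> card (f -` {y} \<inter> A)" using assms(2,3) by (simp add: card_gt_0_iff)
  then obtain S where "S \<subseteq> f -` {y} \<inter> A" "card S = n"
    by (meson obtain_subset_with_card_n)
  moreover obtain g where "bij_betw g {..<n} S"
    using \<open>card S = n\<close> ex_bij_betw_nat_finite[of S] \<open>finite A\<close> \<open>S \<subseteq> f -` {y} \<inter> A\<close>
    by (metis finite_Int finite_subset lessThan_atLeast0)
  ultimately show ?thesis by (intro exI[of _ g] exI[of _ y]) (auto simp: bij_betw_def)
qed

definition silent_pattern :: "(nat \<Rightarrow> real list \<Rightarrow> bool) \<Rightarrow> nat \<Rightarrow> nat \<Rightarrow> bool list" where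
  "silent_pattern alg T x = map (\<lambda>s. alg x (replicate s 0) = alg x []) [0..<T]"

lemma ex_ids_with_equal_silent_pattern:
  assumes "n * 2^T \<le> N"
  shows "\<exists>ident p. inj_on ident {..<n} \<and> ident ` {..<n} \<subseteq> {1..N} \<and>
                   (\<forall>i<n. silent_pattern alg T (ident i) = p)"
proof (rule pigeonhole_inj_fibre)
  let ?patterns = "{xs :: bool list. set xs \<subseteq> UNIV \<and> length xs = T}"
  show "finite ?patterns" by (rule finite_lists_length_eq) simp
  show "?patterns \<noteq> {}" by (auto intro: exI[of _ "replicate T True"])
  show "silent_pattern alg T ` {1..N} \<subseteq> ?patterns" by (auto simp: silent_pattern_def)
  show "n * card ?patterns \<le> card {1..N}"
    using assms card_lists_length_eq[of "UNIV :: bool set" T] by simp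
qed simp

lemma equal_silent_patterns_keep_rounds_trivial:
  assumes "odd n" and "\<forall>i<n. silent_pattern alg T (ident i) = p"
  shows "\<forall>t<T. round_rot n pos (\<lambda>i. alg (ident i) []) ident alg t = 0"
  unfolding trivial_rounds_iff_unanimous[OF \<open>odd n\<close>]
proof (intro allI impI)
  fix s assume "s < T"
  have choice: "(alg (ident i) (replicate s 0) = alg (ident i) []) \<longleftrightarrow> p ! s" if "i < n" for i
  proof -
    have "p ! s = silent_pattern alg T (ident i) ! s" using assms(2) that by simp
    also have "\<dots> \<longleftrightarrow> (alg (ident i) (replicate s 0) = alg (ident i) [])"
      using \<open>s < T\<close> by (simp add: silent_pattern_def)
    finally show ?thesis by simp
  qed
  show "unanimous n (\<lambda>i. alg (ident i) (replicate s 0) = alg (ident i) [])"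
    unfolding unanimous_def using choice by blast
qed

lemma valid_config_evenly_spaced:
  assumes "4 < n" "n \<le> N" "inj_on ident {..<n}" "ident ` {..<n} \<subseteq> {1..N}"
  shows "valid_config N n (\<lambda>i. real i / real n) ident"
  using assms unfolding valid_config_def by (auto simp: divide_strict_right_mono)

lemma adversary_lower_bound:
  assumes "odd n" "4 < n" "n \<le> N"
  shows "\<exists>pos orient ident. valid_config N n pos ident \<and>
           (\<forall>t. real (Suc t) < log 2 (real N / real n) \<longrightarrow>
                \<not> nontrivial n (round_rot n pos orient ident alg t))"
proof -
  have "0 < N div n" using assms(2,3) by (simp add: div_greater_zero_iff)
  then obtain T where "2^T \<le> N div n" and T_upper: "N div n < 2^(T + 1)"
    using ex_power_ivl1[of 2 "N div n"] by (auto simp: Suc_le_eq)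
  have "n * 2^T \<le> n * (N div n)" using \<open>2^T \<le> N div n\<close> by simp
  also have "\<dots> \<le> N" by (simp add: mult.commute div_times_less_eq_dividend)
  finally have "n * 2^T \<le> N" .
  then obtain ident p where "inj_on ident {..<n}" "ident ` {..<n} \<subseteq> {1..N}"
    and pattern: "\<forall>i<n. silent_pattern alg T (ident i) = p"
    using ex_ids_with_equal_silent_pattern by blast
  have "real N / real n < 2^(T + 1)"
  proof -
    have "N < n * 2^(T + 1)"
      using T_upper \<open>4 < n\<close> by (simp add: div_less_iff_less_mult mult.commute)
    hence "real N < real n * 2^(T + 1)" by (metis of_nat_less_iff of_nat_mult of_nat_numeral of_nat_power)
    thus ?thesis using \<open>4 < n\<close> by (simp add: divide_less_eq mult.commute)
  qed
  hence "log 2 (real N / real n) < log 2 (2^(T + 1))"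
    using \<open>4 < n\<close> \<open>n \<le> N\<close> by simp
  also have "\<dots> = real (T + 1)" by (rule log_pow_cancel) simp_all
  finally have "log 2 (real N / real n) < real (T + 1)" .
  show ?thesis
  proof (intro exI conjI allI impI)
    show "valid_config N n (\<lambda>i. real i / real n) ident"
      using valid_config_evenly_spaced assms(2,3) \<open>inj_on ident {..<n}\<close>
        \<open>ident ` {..<n} \<subseteq> {1..N}\<close> by blast
    fix t assume "real (Suc t) < log 2 (real N / real n)"
    with \<open>log 2 (real N / real n) < real (T + 1)\<close> have "t < T" by simp
    thus "\<not> nontrivial n (round_rot n (\<lambda>i. real i / real n) (\<lambda>i. alg (ident i) []) ident alg t)"
      using equal_silent_patterns_keep_rounds_trivial[OF \<open>odd n\<close> pattern]
        nontrivial_iff_neq_0[OF \<open>odd n\<close>] by blast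
  qed
qed

theorem proposition3:
  shows "(\<exists>c::real. \<forall>N. \<exists>alg.
            \<forall>n pos orient ident. valid_config N n pos ident \<and> odd n \<longrightarrow>
              (\<exists>t. real (Suc t) \<le> c * (1 + log 2 (real N / real n)) \<and>
                   nontrivial n (round_rot n pos orient ident alg t)))
       \<and> (\<exists>c::real. c > 0 \<and> (\<forall>N n. odd n \<and> 4 < n \<and> n \<le> N \<longrightarrow>
            (\<forall>alg. \<exists>pos orient ident. valid_config N n pos ident \<and>
              (\<forall>t. real (Suc t) < c * log 2 (real N / real n) \<longrightarrow>
                   \<not> nontrivial n (round_rot n pos orient ident alg t)))))"
  apply (rule conjI)
  subgoal using bit_algorithm_upper_bound by (intro exI[of _ 3]) blast
  subgoal using adversary_lower_bound by (intro exI[of _ 1]) auto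
  done

end
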